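(* Let $G=(V,E,\{c_e\}_{e\in E})$ be a finite connected undirected graph with at least two vertices, positive conductances and arbitrarily oriented edges. Let $w\in\mathbb{R}^E_{>0}$ and define $\mu_w(x):=\frac{1}{2\|w\|_2^2}\sum_{e:\,x\in e}w_e^2$, $M:=\operatorname{diag}(\mu_w)$, and $H_t:=\exp(-tM^{-1}L)M^{-1}$ for $t\ge0$. Then $$\int_0^\infty w^\top\left|C^{1/2}BH_tB^\top C^{1/2}\right|w\,dt\le 2\|w\|_2^2H(\mu_w),$$ where the absolute value of a matrix is taken entrywise and $H(\mu)=-\sum_x\mu(x)\log\mu(x)$ is the natural-log entropy.
   Context: For a vertex $v$, $\mathbbm{1}_v\in\mathbb{R}^V$ is the standard basis vector. For an edge $e$ oriented from $e^-$ to $e^+$, $b_e:=\mathbbm{1}_{e^+}-\mathbbm{1}_{e^-}$; $B\in\mathbb{R}^{E\times V}$ is the matrix with rows $b_e^\top$; $C=\operatorname{diag}(c_e)$; $L=B^\top CB$ is the Laplacian. The matrix exponential is $\exp(A)=\sum_{k\ge0}A^k/k!$. Graphs have no self-loops. *)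

theory Defs
  imports "HOL-Analysis.Analysis"
begin

text \<open>A finite multigraph with oriented edges: each edge e goes from
  src e (= e^-) to tgt e (= e^+).  Vertices are the finite type 'v, edges the
  finite type 'e.\<close>

definition no_self_loops :: "('e \<Rightarrow> 'v) \<Rightarrow> ('e \<Rightarrow> 'v) \<Rightarrow> bool" where
  "no_self_loops src tgt \<longleftrightarrow> (\<forall>e. src e \<noteq> tgt e)"

definition adj_rel :: "('e \<Rightarrow> 'v) \<Rightarrow> ('e \<Rightarrow> 'v) \<Rightarrow> ('v \<times> 'v) set" where
  "adj_rel src tgt = {(src e, tgt e) | e. True} \<union> {(tgt e, src e) | e. True}"

definition graph_connected :: "('e \<Rightarrow> 'v) \<Rightarrow> ('e \<Rightarrow> 'v) \<Rightarrow> bool" where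
  "graph_connected src tgt \<longleftrightarrow> (\<forall>u v. (u, v) \<in> (adj_rel src tgt)\<^sup>*)"

definition incidence :: "('e \<Rightarrow> 'v) \<Rightarrow> ('e \<Rightarrow> 'v) \<Rightarrow> real^'v^'e" where
  "incidence src tgt = (\<chi> e v. (if v = tgt e then 1 else 0) - (if v = src e then 1 else 0))"

definition diag_mat :: "('n \<Rightarrow> real) \<Rightarrow> real^'n^'n" where
  "diag_mat d = (\<chi> i j. if i = j then d i else 0)"

definition laplacian :: "('e::finite \<Rightarrow> 'v::finite) \<Rightarrow> ('e \<Rightarrow> 'v) \<Rightarrow> ('e \<Rightarrow> real) \<Rightarrow> real^'v^'v" where
  "laplacian src tgt c = transpose (incidence src tgt) ** diag_mat c ** incidence src tgt"

fun mat_pow :: "real^'n^'n \<Rightarrow> nat \<Rightarrow> real^'n^'n" where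
  "mat_pow A 0 = mat 1"
| "mat_pow A (Suc k) = A ** mat_pow A k"

definition mat_exp :: "real^'n^'n \<Rightarrow> real^'n^'n" where
  "mat_exp A = (\<Sum>k. (1 / fact k) *\<^sub>R mat_pow A k)"

definition mu_w :: "('e::finite \<Rightarrow> 'v) \<Rightarrow> ('e \<Rightarrow> 'v) \<Rightarrow> ('e \<Rightarrow> real) \<Rightarrow> 'v \<Rightarrow> real" where
  "mu_w src tgt w x = (\<Sum>e | x = src e \<or> x = tgt e. (w e)^2) / (2 * (\<Sum>e\<in>UNIV. (w e)^2))"

definition entropy :: "('v::finite \<Rightarrow> real) \<Rightarrow> real" where
  "entropy \<mu> = - (\<Sum>x\<in>UNIV. \<mu> x * ln (\<mu> x))"

definition heat_kernel :: "('e::finite \<Rightarrow> 'v::finite) \<Rightarrow> ('e \<Rightarrow> 'v) \<Rightarrow> ('e \<Rightarrow> real) \<Rightarrow> ('e \<Rightarrow> real) \<Rightarrow> real \<Rightarrow> real^'v^'v" where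
  "heat_kernel src tgt c w t =
     (let Minv = diag_mat (\<lambda>x. 1 / mu_w src tgt w x)
      in mat_exp ((- t) *\<^sub>R (Minv ** laplacian src tgt c)) ** Minv)"

definition integrand :: "('e::finite \<Rightarrow> 'v::finite) \<Rightarrow> ('e \<Rightarrow> 'v) \<Rightarrow> ('e \<Rightarrow> real) \<Rightarrow> ('e \<Rightarrow> real) \<Rightarrow> real \<Rightarrow> real" where
  "integrand src tgt c w t =
     (let Ch = diag_mat (\<lambda>e. sqrt (c e)); B = incidence src tgt;
          A = Ch ** B ** heat_kernel src tgt c w t ** transpose B ** Ch
      in \<Sum>e\<in>UNIV. \<Sum>f\<in>UNIV. w e * \<bar>A $ e $ f\<bar> * w f)"

end

theory Submission
  imports Defs
begin

text \<open>Write the heat kernel as H_t(x, y) = P_t(x, y) / \<mu>(y), where P_t = exp(t Q) and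
  Q = - M^{-1} L generates a \<mu>-reversible random walk. By the semigroup law and reversibility,
  H_{2s}(x, y) = \<Sum>_z \<mu>(z) H_s(x, z) H_s(y, z), so C^{1/2} B H_{2s} B^T C^{1/2} is a \<mu>-average
  of rank-one matrices and the integrand at time 2s is at most
  \<Sum>_z \<mu>(z) (\<Sum>_e w_e c_e^{1/2} |\<nabla>_e H_s(., z)|)^2. For the density g = H_s(., z), Cauchy-Schwarz
  with weights w_e^2 times the endpoint means of g, together with the bound of the logarithmic mean
  by the arithmetic mean, bounds each term by ||w||^2 \<Sum>_e c_e \<nabla>_e g \<nabla>_e ln g, which is minus the
  time derivative of the relative entropy \<Sum>_x \<mu>(x) g(x) ln g(x). Integrating in time leaves
  2 ||w||^2 \<Sum>_z \<mu>(z) Ent(1_z / \<mu>(z)) = 2 ||w||^2 H(\<mu>). To keep the logarithms finite, g is first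
  mixed with the constant density 1 in proportion \<epsilon>, and \<epsilon> tends to 0 at the end.\<close>

section \<open>Entries of the matrix exponential\<close>

lemma sum_if_eq_mult: "(\<Sum>l\<in>UNIV. (if i = l then a else 0) * (f l :: real)) = a * f (i::'n::finite)"
  by (subst sum.cong[OF refl, of _ _ "\<lambda>l. if i = l then a * f l else 0"]) auto

lemma sum_mult_if_eq: "(\<Sum>l\<in>UNIV. (f l :: real) * (if l = j then a else 0)) = f (j::'n::finite) * a"
  by (subst sum.cong[OF refl, of _ _ "\<lambda>l. if l = j then f l * a else 0"]) auto

lemma matrix_mult_entry: "(X ** Y) $ i $ j = (\<Sum>k\<in>UNIV. X $ i $ k * Y $ k $ j :: real)"
  by (simp add: matrix_matrix_mult_def)

lemma diag_mat_mult_entry: "(diag_mat d ** X) $ i $ j = d i * X $ i $ j"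
  using sum_if_eq_mult[of i "d i" "\<lambda>k. X $ k $ j"]
  by (simp add: matrix_mult_entry diag_mat_def cong: if_cong)

lemma matrix_mult_diag_mat_entry: "(X ** diag_mat d) $ i $ j = X $ i $ j * d j"
  using sum_mult_if_eq[of "\<lambda>k. X $ i $ k" j "d j"]
  by (simp add: matrix_mult_entry diag_mat_def cong: if_cong)

lemma mat_pow_Suc_right: "mat_pow A (Suc k) = mat_pow A k ** A"
  by (induction k) (simp_all add: matrix_mul_assoc)

lemma mat_pow_Suc_entry: "mat_pow A (Suc k) $ i $ j = (\<Sum>l\<in>UNIV. A $ i $ l * mat_pow A k $ l $ j)"
  by (simp add: matrix_mult_entry)

lemma mat_pow_Suc_entry': "mat_pow A (Suc k) $ i $ j = (\<Sum>l\<in>UNIV. mat_pow A k $ i $ l * A $ l $ j)"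
  by (simp only: mat_pow_Suc_right matrix_mult_entry)

lemma mat_pow_scaleR: "mat_pow (r *\<^sub>R A) k = (r ^ k) *\<^sub>R mat_pow A k"
  by (induction k) (simp_all add: vec_eq_iff matrix_mult_entry sum_distrib_left mult_ac)

definition entry_norm1 :: "real^'n^'n \<Rightarrow> real" where
  "entry_norm1 A = (\<Sum>i\<in>UNIV. \<Sum>j\<in>UNIV. \<bar>A $ i $ j\<bar>)"

lemma row_norm1_le_entry_norm1: "(\<Sum>j\<in>UNIV. \<bar>A $ i $ j\<bar>) \<le> entry_norm1 A"
  unfolding entry_norm1_def
  by (rule member_le_sum[where f="\<lambda>i. \<Sum>j\<in>UNIV. \<bar>A $ i $ j\<bar>"]) (auto intro: sum_nonneg)

lemma abs_entry_le_entry_norm1: "\<bar>A $ i $ j\<bar> \<le> entry_norm1 A"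
  by (rule order_trans[OF member_le_sum row_norm1_le_entry_norm1]) auto

lemma abs_mat_pow_entry_le: "\<bar>mat_pow A k $ i $ j\<bar> \<le> entry_norm1 A ^ k"
proof (induction k arbitrary: i j)
  case 0
  then show ?case by (simp add: mat_def)
next
  case (Suc k)
  have "\<bar>mat_pow A (Suc k) $ i $ j\<bar> \<le> (\<Sum>l\<in>UNIV. \<bar>A $ i $ l\<bar> * \<bar>mat_pow A k $ l $ j\<bar>)"
    unfolding mat_pow_Suc_entry by (rule order_trans[OF sum_abs]) (simp add: abs_mult)
  also have "\<dots> \<le> (\<Sum>l\<in>UNIV. \<bar>A $ i $ l\<bar>) * entry_norm1 A ^ k"
    unfolding sum_distrib_right by (intro sum_mono mult_left_mono Suc.IH) auto
  also have "\<dots> \<le> entry_norm1 A ^ Suc k"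
    using abs_entry_le_entry_norm1[of A i i]
    by (auto intro: mult_right_mono row_norm1_le_entry_norm1)
  finally show ?case .
qed

definition exp_entry :: "real^'n^'n \<Rightarrow> real \<Rightarrow> 'n \<Rightarrow> 'n \<Rightarrow> real" where
  "exp_entry A t i j = (\<Sum>k. mat_pow A k $ i $ j / fact k * t ^ k)"

lemma summable_exp_entry: "summable (\<lambda>k. mat_pow A k $ i $ j / fact k * t ^ k)"
proof (rule summable_comparison_test')
  show "summable (\<lambda>k. inverse (fact k) * (entry_norm1 A * \<bar>t\<bar>) ^ k)"
    by (rule summable_exp)
  show "norm (mat_pow A k $ i $ j / fact k * t ^ k) \<le> inverse (fact k) * (entry_norm1 A * \<bar>t\<bar>) ^ k"
    for k
    using abs_mat_pow_entry_le[of A k i j]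
    by (simp add: abs_mult power_abs power_mult_distrib divide_inverse mult_ac mult_left_mono)
qed

lemma sums_matrix:
  fixes f :: "nat \<Rightarrow> real^'m^'n"
  assumes "\<And>i j. (\<lambda>k. f k $ i $ j) sums S i j"
  shows "f sums (\<chi> i j. S i j)"
proof -
  have "(\<Sum>k<n. f k) = (\<chi> i j. \<Sum>k<n. f k $ i $ j)" for n
    by (simp add: vec_eq_iff sum_component)
  with assms show ?thesis
    unfolding sums_def by (simp add: tendsto_vec_lambda)
qed

lemma mat_exp_scaleR_entry: "mat_exp (t *\<^sub>R A) $ i $ j = exp_entry A t i j"
proof -
  have "(\<lambda>k. (1 / fact k) *\<^sub>R mat_pow (t *\<^sub>R A) k) sums (\<chi> i j. exp_entry A t i j)"
    using summable_exp_entry[THEN summable_sums]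
    by (intro sums_matrix) (simp add: mat_pow_scaleR exp_entry_def mult_ac)
  then show ?thesis
    unfolding mat_exp_def by (simp add: sums_iff)
qed

lemma exp_entry_0: "exp_entry A 0 i j = (if i = j then 1 else 0)"
  unfolding exp_entry_def by (subst powser_zero) (simp add: mat_def)

lemma diffs_divide_fact: "diffs (\<lambda>k. (M k :: real) / fact k) k = M (Suc k) / fact k"
  unfolding diffs_def by (simp add: fact_Suc divide_simps del: of_nat_Suc)

lemma exp_entry_has_derivative_series:
  "((\<lambda>t. exp_entry A t i j) has_field_derivative
      (\<Sum>k. mat_pow A (Suc k) $ i $ j / fact k * t ^ k)) (at t)"
  using termdiffs_strong_converges_everywhere[OF summable_exp_entry[of A i j]]
  unfolding exp_entry_def diffs_divide_fact .

lemma exp_entry_has_derivative: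
  "((\<lambda>t. exp_entry A t i j) has_field_derivative (\<Sum>l\<in>UNIV. A $ i $ l * exp_entry A t l j)) (at t)"
proof -
  have "mat_pow A (Suc k) $ i $ j / fact k * t ^ k
      = (\<Sum>l\<in>UNIV. A $ i $ l * (mat_pow A k $ l $ j / fact k * t ^ k))" for k
    unfolding mat_pow_Suc_entry by (simp add: sum_distrib_left sum_distrib_right sum_divide_distrib mult_ac)
  then have "(\<Sum>k. mat_pow A (Suc k) $ i $ j / fact k * t ^ k)
      = (\<Sum>l\<in>UNIV. \<Sum>k. A $ i $ l * (mat_pow A k $ l $ j / fact k * t ^ k))"
    by (simp only:) (rule suminf_sum, intro summable_mult summable_exp_entry)
  also have "\<dots> = (\<Sum>l\<in>UNIV. A $ i $ l * exp_entry A t l j)"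
    unfolding exp_entry_def by (intro sum.cong refl) (rule suminf_mult[OF summable_exp_entry])
  finally have series: "(\<Sum>k. mat_pow A (Suc k) $ i $ j / fact k * t ^ k) = \<dots>" .
  show ?thesis
    using exp_entry_has_derivative_series[of A i j t] unfolding series .
qed

lemma exp_entry_has_derivative':
  "((\<lambda>t. exp_entry A t i j) has_field_derivative (\<Sum>l\<in>UNIV. exp_entry A t i l * A $ l $ j)) (at t)"
proof -
  have "mat_pow A (Suc k) $ i $ j / fact k * t ^ k
      = (\<Sum>l\<in>UNIV. A $ l $ j * (mat_pow A k $ i $ l / fact k * t ^ k))" for k
    unfolding mat_pow_Suc_entry' by (simp add: sum_distrib_left sum_distrib_right sum_divide_distrib mult_ac)
  then have "(\<Sum>k. mat_pow A (Suc k) $ i $ j / fact k * t ^ k)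
      = (\<Sum>l\<in>UNIV. \<Sum>k. A $ l $ j * (mat_pow A k $ i $ l / fact k * t ^ k))"
    by (simp only:) (rule suminf_sum, intro summable_mult summable_exp_entry)
  also have "\<dots> = (\<Sum>l\<in>UNIV. exp_entry A t i l * A $ l $ j)"
    unfolding exp_entry_def
    by (intro sum.cong refl, subst suminf_mult[OF summable_exp_entry], simp add: mult.commute)
  finally have series: "(\<Sum>k. mat_pow A (Suc k) $ i $ j / fact k * t ^ k) = \<dots>" .
  show ?thesis
    using exp_entry_has_derivative_series[of A i j t] unfolding series .
qed

text \<open>Stands in for uniqueness of solutions of linear ODEs: the semigroup law and positivity
  both follow by pairing exp((t - r) A) with a solution of the forward equation.\<close>

lemma backward_forward_product_const:
  fixes X Y :: "real \<Rightarrow> 'n::finite \<Rightarrow> 'n \<Rightarrow> real"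
  assumes X: "\<And>r l. ((\<lambda>r. X r i l) has_field_derivative - (\<Sum>m\<in>UNIV. X r i m * A $ m $ l)) (at r)"
    and Y: "\<And>r l. ((\<lambda>r. Y r l j) has_field_derivative (\<Sum>m\<in>UNIV. A $ l $ m * Y r m j)) (at r)"
  shows "(\<Sum>l\<in>UNIV. X r i l * Y r l j) = (\<Sum>l\<in>UNIV. X r' i l * Y r' l j)"
proof (rule DERIV_isconst_all[where f="\<lambda>r. \<Sum>l\<in>UNIV. X r i l * Y r l j"], intro allI)
  fix r
  have swap: "(\<Sum>l\<in>UNIV. X r i l * (\<Sum>m\<in>UNIV. A $ l $ m * Y r m j))
      = (\<Sum>l\<in>UNIV. (\<Sum>m\<in>UNIV. X r i m * A $ m $ l) * Y r l j)"
    by (simp add: sum_distrib_left sum_distrib_right mult_ac) (rule sum.swap)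
  have "(\<Sum>l\<in>UNIV. X r i l * (\<Sum>m\<in>UNIV. A $ l $ m * Y r m j)
      + - (\<Sum>m\<in>UNIV. X r i m * A $ m $ l) * Y r l j) = 0"
    by (simp only: sum.distrib swap) (simp add: sum_negf)
  moreover have "((\<lambda>r. \<Sum>l\<in>UNIV. X r i l * Y r l j) has_field_derivative
      (\<Sum>l\<in>UNIV. X r i l * (\<Sum>m\<in>UNIV. A $ l $ m * Y r m j)
        + - (\<Sum>m\<in>UNIV. X r i m * A $ m $ l) * Y r l j)) (at r)"
    by (intro DERIV_sum DERIV_mult' X Y)
  ultimately show "((\<lambda>r. \<Sum>l\<in>UNIV. X r i l * Y r l j) has_field_derivative 0) (at r)"
    by simp
qed

lemma exp_entry_reverse_has_derivative:
  "((\<lambda>r. exp_entry A (t - r) i j) has_field_derivative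
      - (\<Sum>l\<in>UNIV. exp_entry A (t - r) i l * A $ l $ j)) (at r)"
proof -
  have "((\<lambda>r. exp_entry A (t - r) i j) has_field_derivative
      (\<Sum>l\<in>UNIV. exp_entry A (t - r) i l * A $ l $ j) * (-1)) (at r)"
    by (rule DERIV_chain2[OF exp_entry_has_derivative']) (auto intro!: derivative_eq_intros)
  then show ?thesis by simp
qed

lemma exp_entry_add: "exp_entry A (s + t) i j = (\<Sum>l\<in>UNIV. exp_entry A s i l * exp_entry A t l j)"
proof -
  have "(\<Sum>l\<in>UNIV. exp_entry A (s + t - r) i l * exp_entry A r l j)
      = (\<Sum>l\<in>UNIV. exp_entry A (s + t - r') i l * exp_entry A r' l j)" for r r'
    by (rule backward_forward_product_const)
      (rule exp_entry_reverse_has_derivative, rule exp_entry_has_derivative)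
  from this[of 0 t] show ?thesis
    by (simp add: exp_entry_0 sum_mult_if_eq)
qed

text \<open>Nonnegativity for Metzler matrices: shifting A by a multiple a of the identity makes it
  entrywise nonnegative, and then exp(t A) = exp(- a t) exp(t (A + a I)).\<close>

lemma exp_entry_nonneg:
  assumes off_diag: "\<And>i j. i \<noteq> j \<Longrightarrow> 0 \<le> A $ i $ j" and "0 \<le> t"
  shows "0 \<le> exp_entry A t i j"
proof -
  define a where "a = entry_norm1 A"
  define N where "N = A + a *\<^sub>R mat 1"
  have N_entry: "N $ i $ j = A $ i $ j + (if i = j then a else 0)" for i j
    by (simp add: N_def mat_def)
  have N_nonneg: "0 \<le> N $ i $ j" for i j
    using off_diag[of i j] abs_entry_le_entry_norm1[of A i i] by (auto simp: N_entry a_def)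
  have "0 \<le> mat_pow N k $ i $ j" for k i j
  proof (induction k arbitrary: i j)
    case 0
    then show ?case by (simp add: mat_def)
  next
    case (Suc k)
    then show ?case
      unfolding mat_pow_Suc_entry by (intro sum_nonneg mult_nonneg_nonneg N_nonneg)
  qed
  then have exp_N_nonneg: "0 \<le> exp_entry N r i j" if "0 \<le> r" for r i j
    unfolding exp_entry_def using that by (intro suminf_nonneg summable_exp_entry) auto
  define R where "R r i j = exp (- a * r) * exp_entry N r i j" for r i j
  have R_deriv: "((\<lambda>r. R r l j) has_field_derivative (\<Sum>m\<in>UNIV. A $ l $ m * R r m j)) (at r)" for r l
  proof -
    have "(\<Sum>m\<in>UNIV. N $ l $ m * exp_entry N r m j)
        = (\<Sum>m\<in>UNIV. A $ l $ m * exp_entry N r m j) + a * exp_entry N r l j"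
      unfolding N_entry distrib_right sum.distrib sum_if_eq_mult ..
    then show ?thesis
      unfolding R_def
      by (auto intro!: derivative_eq_intros exp_entry_has_derivative
          simp: algebra_simps sum_distrib_left)
  qed
  have "(\<Sum>l\<in>UNIV. exp_entry A (t - r) i l * R r l j)
      = (\<Sum>l\<in>UNIV. exp_entry A (t - r') i l * R r' l j)" for r r'
    by (rule backward_forward_product_const) (rule exp_entry_reverse_has_derivative, rule R_deriv)
  from this[of 0 t] have "exp_entry A t i j = R t i j"
    by (simp add: exp_entry_0 sum_mult_if_eq sum_if_eq_mult R_def)
  then show ?thesis
    using exp_N_nonneg[OF \<open>0 \<le> t\<close>] by (simp add: R_def)
qed

lemma exp_entry_row_sum:
  assumes "\<And>i. (\<Sum>j\<in>UNIV. A $ i $ j) = 0"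
  shows "(\<Sum>j\<in>UNIV. exp_entry A t i j) = 1"
proof -
  have "(\<Sum>j\<in>UNIV. \<Sum>l\<in>UNIV. exp_entry A r i l * A $ l $ j) = 0" for r
    by (subst sum.swap) (simp add: sum_distrib_left[symmetric] assms)
  moreover have "((\<lambda>t. \<Sum>j\<in>UNIV. exp_entry A t i j) has_field_derivative
      (\<Sum>j\<in>UNIV. \<Sum>l\<in>UNIV. exp_entry A r i l * A $ l $ j)) (at r)" for r
    by (intro DERIV_sum exp_entry_has_derivative')
  ultimately have "((\<lambda>t. \<Sum>j\<in>UNIV. exp_entry A t i j) has_field_derivative 0) (at r)" for r
    by simp
  then have "(\<Sum>j\<in>UNIV. exp_entry A t i j) = (\<Sum>j\<in>UNIV. exp_entry A 0 i j)"
    using DERIV_isconst_all by blast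
  then show ?thesis
    by (simp add: exp_entry_0)
qed

lemma exp_entry_reversible:
  assumes detailed_balance: "\<And>i j. m i * A $ i $ j = m j * A $ j $ i"
  shows "m i * exp_entry A t i j = m j * exp_entry A t j i"
proof -
  have pow: "m i * mat_pow A k $ i $ j = m j * mat_pow A k $ j $ i" for k i j
  proof (induction k arbitrary: i j)
    case 0
    then show ?case by (simp add: mat_def)
  next
    case (Suc k)
    have "m i * mat_pow A (Suc k) $ i $ j = (\<Sum>l\<in>UNIV. (m i * A $ i $ l) * mat_pow A k $ l $ j)"
      by (simp only: mat_pow_Suc_entry sum_distrib_left mult.assoc)
    also have "\<dots> = (\<Sum>l\<in>UNIV. A $ l $ i * (m j * mat_pow A k $ j $ l))"
      by (simp add: detailed_balance[of i] Suc.IH mult.assoc mult.left_commute)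
    also have "\<dots> = m j * mat_pow A (Suc k) $ j $ i"
      by (simp only: mat_pow_Suc_entry' sum_distrib_left mult_ac)
    finally show ?case .
  qed
  have "m i * exp_entry A t i j = (\<Sum>k. m i * (mat_pow A k $ i $ j / fact k * t ^ k))"
    unfolding exp_entry_def by (rule suminf_mult[OF summable_exp_entry, symmetric])
  also have "\<dots> = (\<Sum>k. m j * (mat_pow A k $ j $ i / fact k * t ^ k))"
    by (simp only: pow times_divide_eq_right mult.assoc[symmetric])
  also have "\<dots> = m j * exp_entry A t j i"
    unfolding exp_entry_def by (rule suminf_mult[OF summable_exp_entry])
  finally show ?thesis .
qed

section \<open>Elementary inequalities\<close>

lemma ln_ge_two_diff_div_add:
  fixes x :: real
  assumes "1 \<le> x"
  shows "2 * (x - 1) / (x + 1) \<le> ln x"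
proof -
  let ?f = "\<lambda>u::real. ln u - 2 * (u - 1) / (u + 1)"
  have "?f 1 \<le> ?f x"
  proof (rule DERIV_nonneg_imp_nondecreasing[OF assms])
    fix u :: real
    assume u: "1 \<le> u" "u \<le> x"
    have "(?f has_real_derivative (1 / u - 4 / (u + 1)^2)) (at u)"
      using u by (auto intro!: derivative_eq_intros simp: field_simps power2_eq_square)
    moreover have "4 * u \<le> (u + 1)^2"
      using sum_power2_ge_zero[of "u - 1" 0] by (simp add: power2_eq_square algebra_simps)
    then have "0 \<le> 1 / u - 4 / (u + 1)^2"
      using u by (simp add: field_simps)
    ultimately show "\<exists>y. (?f has_real_derivative y) (at u) \<and> 0 \<le> y"
      by blast
  qed
  then show ?thesis by simp
qed

text \<open>The logarithmic mean of p and q is at most their arithmetic mean.\<close>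

lemma diff_sq_div_mean_le_diff_mult_ln_diff:
  fixes p q :: real
  assumes "0 < p" "0 < q"
  shows "(p - q)^2 / ((p + q) / 2) \<le> (p - q) * (ln p - ln q)"
proof -
  have *: "(a - b)^2 / ((a + b) / 2) \<le> (a - b) * (ln a - ln b)" if "0 < b" "b \<le> a" for a b :: real
  proof -
    have "a / b - 1 = (a - b) / b" "a / b + 1 = (a + b) / b"
      using that by (simp_all add: field_simps)
    then have "2 * (a - b) / (a + b) = 2 * (a / b - 1) / (a / b + 1)"
      using that by simp
    also have "\<dots> \<le> ln (a / b)"
      using that by (intro ln_ge_two_diff_div_add) simp
    also have "\<dots> = ln a - ln b"
      using that by (simp add: ln_div)
    finally have "(a - b) * (2 * (a - b) / (a + b)) \<le> (a - b) * (ln a - ln b)"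
      using that by (intro mult_left_mono) auto
    then show ?thesis
      by (simp add: power2_eq_square algebra_simps)
  qed
  show ?thesis
    using *[of q p] *[of p q] assms
    by (cases "q \<le> p") (auto simp: power2_commute algebra_simps)
qed

lemma diff_one_le_mult_ln:
  fixes u :: real
  assumes "0 < u"
  shows "u - 1 \<le> u * ln u"
proof -
  have "1 - 1 / u \<le> ln u"
    using ln_le_minus_one[of "1 / u"] assms by (simp add: ln_div)
  then have "u * (1 - 1 / u) \<le> u * ln u"
    using assms by (intro mult_left_mono) auto
  then show ?thesis
    using assms by (simp add: right_diff_distrib)
qed

lemma nn_integral_atLeast_le_of_DERIV:
  fixes f F :: "real \<Rightarrow> real"
  assumes f_borel: "f \<in> borel_measurable borel"
    and deriv: "\<And>x. a \<le> x \<Longrightarrow> DERIV F x :> f x"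
    and nonneg: "\<And>x. a \<le> x \<Longrightarrow> 0 \<le> f x"
    and bound: "\<And>x. a \<le> x \<Longrightarrow> F x \<le> B"
  shows "(\<integral>\<^sup>+x. ennreal (f x) * indicator {a ..} x \<partial>lborel) \<le> ennreal (B - F a)"
proof -
  have mono: "F x \<le> F y" if "a \<le> x" "x \<le> y" for x y
    using that deriv nonneg order_trans by (intro DERIV_nonneg_imp_nondecreasing[of x y F]) blast+
  have bdd: "bdd_above (F ` {a..})"
    using bound by (intro bdd_aboveI2[of _ _ B]) auto
  define T where "T = (SUP x\<in>{a..}. F x)"
  have "(F \<longlongrightarrow> T) at_top"
  proof (rule order_tendstoI)
    fix y
    assume "y < T"
    then obtain x where "a \<le> x" "y < F x"
      using less_cSUP_iff[OF _ bdd] unfolding T_def by auto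
    then show "\<forall>\<^sub>F z in at_top. y < F z"
      unfolding eventually_at_top_linorder by (auto intro: less_le_trans mono)
  next
    fix y
    assume "T < y"
    then show "\<forall>\<^sub>F z in at_top. F z < y"
      unfolding eventually_at_top_linorder T_def
      by (auto intro!: exI[of _ a] le_less_trans[OF cSUP_upper[OF _ bdd]])
  qed
  moreover have "T \<le> B"
    unfolding T_def using bound by (auto intro: cSUP_least)
  ultimately show ?thesis
    using nn_integral_FTC_atLeast[OF f_borel deriv nonneg] by (auto intro: ennreal_leI)
qed

section \<open>The heat kernel of a weighted graph\<close>

locale weighted_graph =
  fixes src tgt :: "'e::finite \<Rightarrow> 'v::finite" and c w :: "'e \<Rightarrow> real"
  assumes no_loop: "src e \<noteq> tgt e"
    and c_pos: "0 < c e"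
    and w_pos: "0 < w e"
    and vertex_incident: "\<exists>e. x = src e \<or> x = tgt e"
begin

definition wnorm2 :: real where
  "wnorm2 = (\<Sum>e\<in>UNIV. (w e)^2)"

definition \<mu> :: "'v \<Rightarrow> real" where
  "\<mu> = mu_w src tgt w"

definition grad :: "'e \<Rightarrow> ('v \<Rightarrow> real) \<Rightarrow> real" where
  "grad e u = u (tgt e) - u (src e)"

definition energy :: "('v \<Rightarrow> real) \<Rightarrow> ('v \<Rightarrow> real) \<Rightarrow> real" where
  "energy u v = (\<Sum>e\<in>UNIV. c e * grad e u * grad e v)"

lemma wnorm2_pos: "0 < wnorm2"
proof -
  obtain e :: 'e where True by blast
  have "0 < (w e)^2" using w_pos[of e] by simp
  also have "\<dots> \<le> wnorm2" unfolding wnorm2_def by (rule member_le_sum) auto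
  finally show ?thesis .
qed

lemma sum_mu_mult: "(\<Sum>x\<in>UNIV. \<mu> x * g x) = (\<Sum>e\<in>UNIV. (w e)^2 * (g (src e) + g (tgt e))) / (2 * wnorm2)"
proof -
  have "(\<Sum>x\<in>UNIV. g x * (\<Sum>e | x = src e \<or> x = tgt e. (w e)^2))
      = (\<Sum>x\<in>UNIV. \<Sum>e\<in>UNIV. if x = src e \<or> x = tgt e then g x * (w e)^2 else 0)"
    by (simp add: sum_distrib_left sum.inter_filter[symmetric] if_distrib)
  also have "\<dots> = (\<Sum>e\<in>UNIV. \<Sum>x\<in>UNIV. if x = src e \<or> x = tgt e then g x * (w e)^2 else 0)"
    by (rule sum.swap)
  also have "\<dots> = (\<Sum>e\<in>UNIV. (w e)^2 * (g (src e) + g (tgt e)))"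
  proof (rule sum.cong[OF refl])
    fix e
    have "(\<Sum>x\<in>UNIV. if x = src e \<or> x = tgt e then g x * (w e)^2 else 0)
        = (\<Sum>x\<in>UNIV. (if x = src e then g x * (w e)^2 else 0) + (if x = tgt e then g x * (w e)^2 else 0))"
      using no_loop[of e] by (intro sum.cong refl) auto
    then show "(\<Sum>x\<in>UNIV. if x = src e \<or> x = tgt e then g x * (w e)^2 else 0)
        = (w e)^2 * (g (src e) + g (tgt e))"
      by (simp add: sum.distrib algebra_simps)
  qed
  finally show ?thesis
    unfolding \<mu>_def mu_w_def wnorm2_def by (simp add: sum_divide_distrib[symmetric] mult.commute)
qed

lemma sum_mu: "(\<Sum>x\<in>UNIV. \<mu> x) = 1"
proof -
  have "(\<Sum>e\<in>UNIV. (w e)^2 * (1 + 1)) = 2 * wnorm2"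
    by (simp add: wnorm2_def sum_distrib_left mult.commute)
  then show ?thesis
    using sum_mu_mult[of "\<lambda>_. 1"] wnorm2_pos by simp
qed

lemma mu_pos: "0 < \<mu> x"
proof -
  obtain e where e: "x = src e \<or> x = tgt e"
    using vertex_incident by blast
  have "0 < (w e)^2" using w_pos[of e] by simp
  also have "\<dots> \<le> (\<Sum>e | x = src e \<or> x = tgt e. (w e)^2)"
    by (rule member_le_sum) (use e in auto)
  finally show ?thesis
    unfolding \<mu>_def mu_w_def using wnorm2_pos by (simp add: wnorm2_def)
qed

lemma sum_incidence_mult: "(\<Sum>x\<in>UNIV. incidence src tgt $ e $ x * u x) = grad e u"
proof -
  have "incidence src tgt $ e $ x * u x
      = (if x = tgt e then u x else 0) - (if x = src e then u x else 0)" for x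
    by (simp add: incidence_def)
  then show ?thesis
    by (simp add: sum_subtractf grad_def)
qed

lemma laplacian_entry:
  "laplacian src tgt c $ x $ y = (\<Sum>e\<in>UNIV. c e * incidence src tgt $ e $ x * incidence src tgt $ e $ y)"
  unfolding laplacian_def matrix_mult_entry[of "transpose (incidence src tgt) ** diag_mat c"]
    matrix_mult_diag_mat_entry by (simp add: transpose_def mult_ac)

lemma laplacian_symmetric: "laplacian src tgt c $ x $ y = laplacian src tgt c $ y $ x"
  by (simp add: laplacian_entry mult_ac)

lemma laplacian_off_diag_nonpos:
  assumes "x \<noteq> y"
  shows "laplacian src tgt c $ x $ y \<le> 0"
  unfolding laplacian_entry
proof (intro sum_nonpos)
  fix e
  have "incidence src tgt $ e $ x * incidence src tgt $ e $ y \<le> 0"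
    using assms no_loop[of e] by (auto simp: incidence_def)
  then show "c e * incidence src tgt $ e $ x * incidence src tgt $ e $ y \<le> 0"
    using c_pos[of e] by (simp add: mult.assoc mult_nonneg_nonpos)
qed

lemma dirichlet_form:
  "(\<Sum>x\<in>UNIV. \<Sum>y\<in>UNIV. u x * laplacian src tgt c $ x $ y * v y) = energy u v"
proof -
  let ?B = "incidence src tgt"
  have "(\<Sum>x\<in>UNIV. \<Sum>y\<in>UNIV. u x * laplacian src tgt c $ x $ y * v y)
      = (\<Sum>x\<in>UNIV. \<Sum>y\<in>UNIV. \<Sum>e\<in>UNIV. c e * (?B $ e $ x * u x) * (?B $ e $ y * v y))"
    unfolding laplacian_entry by (simp add: sum_distrib_left sum_distrib_right mult_ac)
  also have "\<dots> = (\<Sum>x\<in>UNIV. \<Sum>e\<in>UNIV. \<Sum>y\<in>UNIV. c e * (?B $ e $ x * u x) * (?B $ e $ y * v y))"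
    by (intro sum.cong refl sum.swap)
  also have "\<dots> = (\<Sum>e\<in>UNIV. \<Sum>x\<in>UNIV. \<Sum>y\<in>UNIV. c e * (?B $ e $ x * u x) * (?B $ e $ y * v y))"
    by (rule sum.swap)
  also have "\<dots> = energy u v"
    by (simp add: energy_def sum_distrib_left sum_distrib_right sum_incidence_mult[symmetric] mult_ac)
  finally show ?thesis .
qed

lemma laplacian_row_sum: "(\<Sum>y\<in>UNIV. laplacian src tgt c $ x $ y) = 0"
proof -
  have "(\<Sum>y\<in>UNIV. incidence src tgt $ e $ y) = 0" for e
    using sum_incidence_mult[of e "\<lambda>_. 1"] by (simp add: grad_def)
  then show ?thesis
    unfolding laplacian_entry by (subst sum.swap) (simp add: sum_distrib_left[symmetric])
qed

text \<open>The generator Q = - M^{-1} L of the continuous-time random walk, and the heat kernel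
  H_t = exp(t Q) M^{-1}, whose entries are transition probabilities divided by \<mu> y.\<close>

definition gen :: "real^'v^'v" where
  "gen = (\<chi> x y. - laplacian src tgt c $ x $ y / \<mu> x)"

definition heat :: "real \<Rightarrow> 'v \<Rightarrow> 'v \<Rightarrow> real" where
  "heat t x y = exp_entry gen t x y / \<mu> y"

lemma mu_mult_gen: "\<mu> x * gen $ x $ y = - laplacian src tgt c $ x $ y"
  using mu_pos[of x] by (simp add: gen_def)

lemma gen_row_sum: "(\<Sum>y\<in>UNIV. gen $ x $ y) = 0"
  by (simp add: gen_def sum_divide_distrib[symmetric] sum_negf laplacian_row_sum)

lemma heat_kernel_entry: "heat_kernel src tgt c w t $ x $ y = heat t x y"
proof -
  have "(- t) *\<^sub>R (diag_mat (\<lambda>x. 1 / mu_w src tgt w x) ** laplacian src tgt c) = t *\<^sub>R gen"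
    by (simp add: vec_eq_iff diag_mat_mult_entry gen_def \<mu>_def)
  then show ?thesis
    by (simp add: heat_kernel_def matrix_mult_diag_mat_entry mat_exp_scaleR_entry heat_def \<mu>_def)
qed

lemma heat_nonneg: "0 \<le> t \<Longrightarrow> 0 \<le> heat t x y"
  unfolding heat_def using mu_pos[of y] laplacian_off_diag_nonpos mu_pos
  by (intro divide_nonneg_pos exp_entry_nonneg) (auto simp: gen_def divide_nonpos_pos)

lemma heat_symmetric: "heat t x y = heat t y x"
proof -
  have "\<mu> x * exp_entry gen t x y = \<mu> y * exp_entry gen t y x"
    by (rule exp_entry_reversible) (simp add: mu_mult_gen laplacian_symmetric)
  then show ?thesis
    unfolding heat_def using mu_pos[of x] mu_pos[of y] by (simp add: field_simps)
qed

lemma sum_mu_mult_heat: "(\<Sum>x\<in>UNIV. \<mu> x * heat t x y) = 1"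
proof -
  have "\<mu> x * heat t x y = exp_entry gen t y x" for x
    using heat_symmetric[of t x y] mu_pos[of x] by (simp add: heat_def)
  then show ?thesis
    using exp_entry_row_sum[OF gen_row_sum] by simp
qed

lemma heat_0: "heat 0 x y = (if x = y then 1 / \<mu> y else 0)"
  by (simp add: heat_def exp_entry_0)

lemma heat_add: "heat (s + t) x y = (\<Sum>z\<in>UNIV. \<mu> z * heat s x z * heat t z y)"
proof -
  have "heat (s + t) x y = (\<Sum>z\<in>UNIV. exp_entry gen s x z * exp_entry gen t z y / \<mu> y)"
    by (simp add: heat_def exp_entry_add sum_divide_distrib)
  also have "\<dots> = (\<Sum>z\<in>UNIV. \<mu> z * heat s x z * heat t z y)"
    using mu_pos by (intro sum.cong refl) (simp add: heat_def less_imp_neq[symmetric])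
  finally show ?thesis .
qed

lemma heat_double: "heat (s + s) x y = (\<Sum>z\<in>UNIV. \<mu> z * heat s x z * heat s y z)"
  unfolding heat_add by (intro sum.cong refl) (metis heat_symmetric)

lemma heat_has_derivative:
  "((\<lambda>t. heat t x y) has_field_derivative (\<Sum>m\<in>UNIV. gen $ x $ m * heat t m y)) (at t)"
  using DERIV_cdivide[OF exp_entry_has_derivative[of gen x y t], of "\<mu> y"]
  by (simp add: heat_def sum_divide_distrib)

section \<open>Entropy dissipation\<close>

lemma integrand_eq:
  "integrand src tgt c w t = (\<Sum>e\<in>UNIV. \<Sum>f\<in>UNIV. w e * w f * sqrt (c e) * sqrt (c f)
      * \<bar>\<Sum>x\<in>UNIV. \<Sum>y\<in>UNIV. incidence src tgt $ e $ x * heat t x y * incidence src tgt $ f $ y\<bar>)"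
proof -
  let ?B = "incidence src tgt" and ?C = "diag_mat (\<lambda>e. sqrt (c e))"
  have "(?C ** ?B ** heat_kernel src tgt c w t ** transpose ?B ** ?C) $ e $ f
      = (\<Sum>y\<in>UNIV. (\<Sum>x\<in>UNIV. sqrt (c e) * ?B $ e $ x * heat t x y) * ?B $ f $ y) * sqrt (c f)" for e f
    by (simp only: matrix_mult_diag_mat_entry diag_mat_mult_entry matrix_mult_entry[of "_ ** _"]
        matrix_mult_entry[of ?B] heat_kernel_entry transpose_def vec_lambda_beta mult.assoc)
  also have "\<dots> e f = sqrt (c e) * sqrt (c f)
      * (\<Sum>x\<in>UNIV. \<Sum>y\<in>UNIV. ?B $ e $ x * heat t x y * ?B $ f $ y)" for e f
    by (subst sum.swap) (simp add: sum_distrib_left sum_distrib_right mult_ac)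
  finally show ?thesis
    unfolding integrand_def Let_def
    by (intro sum.cong refl) (simp add: abs_mult mult_ac less_imp_le[OF c_pos])
qed

text \<open>Splitting at half time writes B H_{2s} B^T as a \<mu>-average of rank-one matrices built
  from the gradients of the columns of H_s.\<close>

lemma incidence_heat_double:
  "(\<Sum>x\<in>UNIV. \<Sum>y\<in>UNIV. incidence src tgt $ e $ x * heat (s + s) x y * incidence src tgt $ f $ y)
    = (\<Sum>z\<in>UNIV. \<mu> z * grad e (\<lambda>x. heat s x z) * grad f (\<lambda>x. heat s x z))"
proof -
  let ?B = "incidence src tgt"
  have "(\<Sum>x\<in>UNIV. \<Sum>y\<in>UNIV. ?B $ e $ x * heat (s + s) x y * ?B $ f $ y)
      = (\<Sum>x\<in>UNIV. \<Sum>y\<in>UNIV. \<Sum>z\<in>UNIV. \<mu> z * (?B $ e $ x * heat s x z) * (?B $ f $ y * heat s y z))"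
    unfolding heat_double by (simp add: sum_distrib_left sum_distrib_right mult_ac)
  also have "\<dots> = (\<Sum>x\<in>UNIV. \<Sum>z\<in>UNIV. \<Sum>y\<in>UNIV. \<mu> z * (?B $ e $ x * heat s x z) * (?B $ f $ y * heat s y z))"
    by (intro sum.cong refl sum.swap)
  also have "\<dots> = (\<Sum>z\<in>UNIV. \<Sum>x\<in>UNIV. \<Sum>y\<in>UNIV. \<mu> z * (?B $ e $ x * heat s x z) * (?B $ f $ y * heat s y z))"
    by (rule sum.swap)
  also have "\<dots> = (\<Sum>z\<in>UNIV. \<mu> z * grad e (\<lambda>x. heat s x z) * grad f (\<lambda>x. heat s x z))"
    by (simp add: sum_distrib_left sum_distrib_right sum_incidence_mult[symmetric] mult_ac)
  finally show ?thesis .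
qed

lemma integrand_double_le:
  "integrand src tgt c w (s + s)
    \<le> (\<Sum>z\<in>UNIV. \<mu> z * (\<Sum>e\<in>UNIV. w e * sqrt (c e) * \<bar>grad e (\<lambda>x. heat s x z)\<bar>)^2)"
proof -
  define X where "X e z = w e * sqrt (c e) * \<bar>grad e (\<lambda>x. heat s x z)\<bar>" for e z
  have X_nonneg: "0 \<le> w e * w f * sqrt (c e) * sqrt (c f)" for e f
    using w_pos[of e] w_pos[of f] c_pos[of e] c_pos[of f] by simp
  have "integrand src tgt c w (s + s) \<le> (\<Sum>e\<in>UNIV. \<Sum>f\<in>UNIV. \<Sum>z\<in>UNIV. \<mu> z * (X e z * X f z))"
    unfolding integrand_eq incidence_heat_double
  proof (intro sum_mono)
    fix e f
    have "\<bar>\<Sum>z\<in>UNIV. \<mu> z * grad e (\<lambda>x. heat s x z) * grad f (\<lambda>x. heat s x z)\<bar>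
        \<le> (\<Sum>z\<in>UNIV. \<mu> z * (\<bar>grad e (\<lambda>x. heat s x z)\<bar> * \<bar>grad f (\<lambda>x. heat s x z)\<bar>))"
      using mu_pos by (intro order_trans[OF sum_abs] sum_mono) (simp add: abs_mult less_imp_le)
    from mult_left_mono[OF this X_nonneg[of e f]]
    show "w e * w f * sqrt (c e) * sqrt (c f)
        * \<bar>\<Sum>z\<in>UNIV. \<mu> z * grad e (\<lambda>x. heat s x z) * grad f (\<lambda>x. heat s x z)\<bar>
        \<le> (\<Sum>z\<in>UNIV. \<mu> z * (X e z * X f z))"
      using w_pos c_pos by (simp add: X_def sum_distrib_left abs_mult mult_ac less_imp_le)
  qed
  also have "\<dots> = (\<Sum>e\<in>UNIV. \<Sum>z\<in>UNIV. \<Sum>f\<in>UNIV. \<mu> z * (X e z * X f z))"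
    by (intro sum.cong refl sum.swap)
  also have "\<dots> = (\<Sum>z\<in>UNIV. \<mu> z * (\<Sum>e\<in>UNIV. \<Sum>f\<in>UNIV. X e z * X f z))"
    by (subst sum.swap) (simp add: sum_distrib_left)
  also have "\<dots> = (\<Sum>z\<in>UNIV. \<mu> z * (\<Sum>e\<in>UNIV. X e z)^2)"
    by (simp only: power2_eq_square sum_product)
  finally show ?thesis
    unfolding X_def .
qed

text \<open>Cauchy-Schwarz with the weights w_e^2 times the arithmetic means of g over the endpoints,
  which sum to wnorm2 exactly when g has \<mu>-mean 1; the logarithmic-mean inequality then bounds
  the squared gradients by the entropy dissipation of g.\<close>

lemma sq_sum_weighted_grad_le_energy_ln:
  assumes g_pos: "\<And>x. 0 < g x" and g_mean: "(\<Sum>x\<in>UNIV. \<mu> x * g x) = 1"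
  shows "(\<Sum>e\<in>UNIV. w e * sqrt (c e) * \<bar>grad e g\<bar>)^2 \<le> wnorm2 * energy g (\<lambda>x. ln (g x))"
proof -
  define m where "m e = (g (src e) + g (tgt e)) / 2" for e
  have m_pos: "0 < m e" for e
    unfolding m_def using g_pos[of "src e"] g_pos[of "tgt e"] by simp
  define a where "a e = w e * sqrt (m e)" for e
  define b where "b e = sqrt (c e) * \<bar>grad e g\<bar> / sqrt (m e)" for e
  have "w e * sqrt (c e) * \<bar>grad e g\<bar> = a e * b e" for e
    unfolding a_def b_def using m_pos[of e] by simp
  then have "(\<Sum>e\<in>UNIV. w e * sqrt (c e) * \<bar>grad e g\<bar>)^2 \<le> (\<Sum>e\<in>UNIV. (a e)^2) * (\<Sum>e\<in>UNIV. (b e)^2)"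
    by (simp add: Cauchy_Schwarz_ineq_sum)
  also have "(\<Sum>e\<in>UNIV. (a e)^2) = wnorm2"
  proof -
    have "(\<Sum>e\<in>UNIV. (a e)^2) = (\<Sum>e\<in>UNIV. (w e)^2 * (g (src e) + g (tgt e))) / 2"
      unfolding a_def m_def using m_pos
      by (simp add: power_mult_distrib less_imp_le m_def sum_divide_distrib)
    then show ?thesis
      using sum_mu_mult[of g] g_mean wnorm2_pos by simp
  qed
  also have "(\<Sum>e\<in>UNIV. (b e)^2) \<le> energy g (\<lambda>x. ln (g x))"
    unfolding energy_def
  proof (rule sum_mono)
    fix e
    have "(b e)^2 = c e * ((g (tgt e) - g (src e))^2 / ((g (tgt e) + g (src e)) / 2))"
      unfolding b_def grad_def using m_pos[of e] c_pos[of e]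
      by (simp add: power_mult_distrib power_divide m_def add.commute)
    also have "\<dots> \<le> c e * ((g (tgt e) - g (src e)) * (ln (g (tgt e)) - ln (g (src e))))"
      using c_pos[of e] g_pos
      by (intro mult_left_mono diff_sq_div_mean_le_diff_mult_ln_diff) (auto simp: less_imp_le)
    finally show "(b e)^2 \<le> c e * grad e g * grad e (\<lambda>x. ln (g x))"
      by (simp add: grad_def)
  qed
  finally show ?thesis
    using wnorm2_pos by (simp add: mult_left_mono)
qed

definition rel_entropy :: "('v \<Rightarrow> real) \<Rightarrow> real" where
  "rel_entropy g = (\<Sum>x\<in>UNIV. \<mu> x * (g x * ln (g x)))"

lemma rel_entropy_nonneg:
  assumes g_pos: "\<And>x. 0 < g x" and g_mean: "(\<Sum>x\<in>UNIV. \<mu> x * g x) = 1"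
  shows "0 \<le> rel_entropy g"
proof -
  have "(\<Sum>x\<in>UNIV. \<mu> x * (g x - 1)) \<le> rel_entropy g"
    unfolding rel_entropy_def using mu_pos g_pos
    by (intro sum_mono mult_left_mono diff_one_le_mult_ln) (auto simp: less_imp_le)
  moreover have "(\<Sum>x\<in>UNIV. \<mu> x * (g x - 1)) = 0"
    using g_mean sum_mu by (simp add: right_diff_distrib sum_subtractf)
  ultimately show ?thesis by simp
qed

lemma rel_entropy_has_derivative:
  assumes g_pos: "\<And>x. 0 < g s x"
    and g_deriv: "\<And>x. ((\<lambda>s. g s x) has_field_derivative (\<Sum>m\<in>UNIV. gen $ x $ m * g s m)) (at s)"
  shows "((\<lambda>s. rel_entropy (g s)) has_field_derivative - energy (g s) (\<lambda>x. ln (g s x))) (at s)"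
proof -
  let ?Qg = "\<lambda>x. \<Sum>m\<in>UNIV. gen $ x $ m * g s m"
  have "((\<lambda>s. g s x * ln (g s x)) has_field_derivative
      g s x * (1 / g s x * ?Qg x) + ?Qg x * ln (g s x)) (at s)" for x
    by (rule DERIV_mult'[OF g_deriv DERIV_chain2[OF DERIV_ln_divide[OF g_pos] g_deriv]])
  then have "((\<lambda>s. rel_entropy (g s)) has_field_derivative
      (\<Sum>x\<in>UNIV. \<mu> x * (g s x * (1 / g s x * ?Qg x) + ?Qg x * ln (g s x)))) (at s)"
    unfolding rel_entropy_def by (intro DERIV_sum DERIV_cmult)
  moreover have "(\<Sum>x\<in>UNIV. \<mu> x * (g s x * (1 / g s x * ?Qg x) + ?Qg x * ln (g s x)))
      = (\<Sum>x\<in>UNIV. \<Sum>m\<in>UNIV. (ln (g s x) + 1) * (\<mu> x * gen $ x $ m) * g s m)"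
    using g_pos less_imp_neq[OF g_pos, symmetric]
    by (intro sum.cong refl) (simp add: sum_distrib_left sum_distrib_right sum.distrib algebra_simps)
  moreover have "\<dots> = - energy (\<lambda>x. ln (g s x) + 1) (g s)"
    by (simp add: mu_mult_gen sum_negf dirichlet_form[symmetric])
  moreover have "energy (\<lambda>x. ln (g s x) + 1) (g s) = energy (g s) (\<lambda>x. ln (g s x))"
    by (simp add: energy_def grad_def mult_ac)
  ultimately show ?thesis
    by simp
qed

text \<open>The density, with respect to \<mu>, of the mixture of the law at time s of the walk started at z
  (weight 1 - \<epsilon>) with \<mu> itself (weight \<epsilon>); mixing in \<mu> keeps the logarithm finite.\<close>

definition mixture_density :: "real \<Rightarrow> real \<Rightarrow> 'v \<Rightarrow> 'v \<Rightarrow> real" where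
  "mixture_density \<epsilon> s z x = (1 - \<epsilon>) * heat s x z + \<epsilon>"

lemma mixture_density_pos:
  "0 < \<epsilon> \<Longrightarrow> \<epsilon> < 1 \<Longrightarrow> 0 \<le> s \<Longrightarrow> 0 < mixture_density \<epsilon> s z x"
  unfolding mixture_density_def using heat_nonneg[of s x z] by (simp add: add_nonneg_pos)

lemma sum_mu_mult_mixture_density: "(\<Sum>x\<in>UNIV. \<mu> x * mixture_density \<epsilon> s z x) = 1"
proof -
  have "(\<Sum>x\<in>UNIV. \<mu> x * mixture_density \<epsilon> s z x)
      = (1 - \<epsilon>) * (\<Sum>x\<in>UNIV. \<mu> x * heat s x z) + \<epsilon> * (\<Sum>x\<in>UNIV. \<mu> x)"
    by (simp add: mixture_density_def distrib_left sum.distrib sum_distrib_left mult_ac)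
  then show ?thesis
    by (simp add: sum_mu_mult_heat sum_mu)
qed

lemma mixture_density_has_derivative:
  "((\<lambda>s. mixture_density \<epsilon> s z x) has_field_derivative
      (\<Sum>m\<in>UNIV. gen $ x $ m * mixture_density \<epsilon> s z m)) (at s)"
proof -
  have "(\<Sum>m\<in>UNIV. gen $ x $ m * mixture_density \<epsilon> s z m)
      = (1 - \<epsilon>) * (\<Sum>m\<in>UNIV. gen $ x $ m * heat s m z) + \<epsilon> * (\<Sum>m\<in>UNIV. gen $ x $ m)"
    by (simp add: mixture_density_def distrib_left sum.distrib sum_distrib_left mult_ac)
  then have "(\<Sum>m\<in>UNIV. gen $ x $ m * mixture_density \<epsilon> s z m)
      = (1 - \<epsilon>) * (\<Sum>m\<in>UNIV. gen $ x $ m * heat s m z)"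
    by (simp add: gen_row_sum)
  then show ?thesis
    unfolding mixture_density_def by (auto intro!: derivative_eq_intros heat_has_derivative)
qed

lemma grad_mixture_density: "grad e (mixture_density \<epsilon> s z) = (1 - \<epsilon>) * grad e (\<lambda>x. heat s x z)"
  by (simp add: grad_def mixture_density_def algebra_simps)

definition dissipation :: "real \<Rightarrow> real \<Rightarrow> real" where
  "dissipation \<epsilon> t = wnorm2 / (1 - \<epsilon>)^2 * (\<Sum>z\<in>UNIV. \<mu> z
      * energy (mixture_density \<epsilon> (t / 2) z) (\<lambda>x. ln (mixture_density \<epsilon> (t / 2) z x)))"

lemma integrand_le_dissipation:
  assumes "0 < \<epsilon>" "\<epsilon> < 1" "0 \<le> t"
  shows "integrand src tgt c w t \<le> dissipation \<epsilon> t"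
proof -
  let ?g = "mixture_density \<epsilon> (t / 2)"
  have "(\<Sum>e\<in>UNIV. w e * sqrt (c e) * \<bar>grad e (\<lambda>x. heat (t / 2) x z)\<bar>)^2
      = (\<Sum>e\<in>UNIV. w e * sqrt (c e) * \<bar>grad e (?g z)\<bar>)^2 / (1 - \<epsilon>)^2" for z
  proof -
    have "(\<Sum>e\<in>UNIV. w e * sqrt (c e) * \<bar>grad e (?g z)\<bar>)
        = (1 - \<epsilon>) * (\<Sum>e\<in>UNIV. w e * sqrt (c e) * \<bar>grad e (\<lambda>x. heat (t / 2) x z)\<bar>)"
      using assms by (simp add: grad_mixture_density abs_mult sum_distrib_left mult_ac)
    then show ?thesis
      using assms by (simp add: power_mult_distrib)
  qed
  also have "\<dots> z \<le> wnorm2 / (1 - \<epsilon>)^2 * energy (?g z) (\<lambda>x. ln (?g z x))" for z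
    using sq_sum_weighted_grad_le_energy_ln[OF mixture_density_pos sum_mu_mult_mixture_density] assms
    by (simp add: divide_right_mono)
  finally have half_time_bound: "(\<Sum>e\<in>UNIV. w e * sqrt (c e) * \<bar>grad e (\<lambda>x. heat (t / 2) x z)\<bar>)^2
      \<le> wnorm2 / (1 - \<epsilon>)^2 * energy (?g z) (\<lambda>x. ln (?g z x))" for z .
  have "integrand src tgt c w t
      \<le> (\<Sum>z\<in>UNIV. \<mu> z * (\<Sum>e\<in>UNIV. w e * sqrt (c e) * \<bar>grad e (\<lambda>x. heat (t / 2) x z)\<bar>)^2)"
    using integrand_double_le[of "t / 2"] by simp
  also have "\<dots> \<le> (\<Sum>z\<in>UNIV. \<mu> z * (wnorm2 / (1 - \<epsilon>)^2 * energy (?g z) (\<lambda>x. ln (?g z x))))"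
    using mu_pos half_time_bound by (intro sum_mono mult_left_mono) (auto simp: less_imp_le)
  also have "\<dots> = dissipation \<epsilon> t"
    by (simp add: dissipation_def sum_distrib_left mult_ac)
  finally show ?thesis .
qed

lemma integrand_nonneg: "0 \<le> integrand src tgt c w t"
  unfolding integrand_eq using w_pos c_pos
  by (intro sum_nonneg mult_nonneg_nonneg) (auto simp: less_imp_le)

lemma dissipation_nonneg: "0 < \<epsilon> \<Longrightarrow> \<epsilon> < 1 \<Longrightarrow> 0 \<le> t \<Longrightarrow> 0 \<le> dissipation \<epsilon> t"
  using integrand_nonneg integrand_le_dissipation order_trans by blast

definition dissipation_primitive :: "real \<Rightarrow> real \<Rightarrow> real" where
  "dissipation_primitive \<epsilon> t
    = - (2 * wnorm2 / (1 - \<epsilon>)^2) * (\<Sum>z\<in>UNIV. \<mu> z * rel_entropy (mixture_density \<epsilon> (t / 2) z))"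

lemma dissipation_primitive_nonpos:
  "0 < \<epsilon> \<Longrightarrow> \<epsilon> < 1 \<Longrightarrow> 0 \<le> t \<Longrightarrow> dissipation_primitive \<epsilon> t \<le> 0"
  unfolding dissipation_primitive_def
  using wnorm2_pos mu_pos rel_entropy_nonneg[OF mixture_density_pos sum_mu_mult_mixture_density]
  by (intro mult_nonpos_nonneg sum_nonneg mult_nonneg_nonneg) (auto simp: less_imp_le)

lemma dissipation_primitive_has_derivative:
  assumes "0 < \<epsilon>" "\<epsilon> < 1" "0 \<le> t"
  shows "(dissipation_primitive \<epsilon> has_field_derivative dissipation \<epsilon> t) (at t)"
proof -
  have "((\<lambda>t. rel_entropy (mixture_density \<epsilon> (t / 2) z)) has_field_derivative
      - energy (mixture_density \<epsilon> (t / 2) z) (\<lambda>x. ln (mixture_density \<epsilon> (t / 2) z x)) * (1 / 2)) (at t)"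
    for z
    using assms
    by (intro DERIV_chain2[OF rel_entropy_has_derivative[OF mixture_density_pos mixture_density_has_derivative]])
      (auto intro!: derivative_eq_intros)
  then have "(dissipation_primitive \<epsilon> has_field_derivative - (2 * wnorm2 / (1 - \<epsilon>)^2) * (\<Sum>z\<in>UNIV. \<mu> z
        * (- energy (mixture_density \<epsilon> (t / 2) z) (\<lambda>x. ln (mixture_density \<epsilon> (t / 2) z x)) * (1 / 2))))
      (at t)"
    unfolding dissipation_primitive_def[abs_def] by (intro DERIV_cmult DERIV_sum)
  then show ?thesis
    by (simp add: dissipation_def sum_negf sum_divide_distrib[symmetric])
qed

lemma dissipation_measurable: "dissipation \<epsilon> \<in> borel_measurable borel"
proof -
  have "((\<lambda>t. mixture_density \<epsilon> (t / 2) z x) has_field_derivative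
      (\<Sum>m\<in>UNIV. gen $ x $ m * mixture_density \<epsilon> (t / 2) z m) * (1 / 2)) (at t)" for z x t
    by (rule DERIV_chain2[OF mixture_density_has_derivative]) (auto intro!: derivative_eq_intros)
  then have "continuous_on UNIV (\<lambda>t. mixture_density \<epsilon> (t / 2) z x)" for z x
    by (intro continuous_at_imp_continuous_on ballI DERIV_isCont)
  then have [measurable]: "(\<lambda>t. mixture_density \<epsilon> (t / 2) z x) \<in> borel_measurable borel" for z x
    by (rule borel_measurable_continuous_onI)
  show ?thesis
    unfolding dissipation_def[abs_def] energy_def grad_def by measurable
qed

lemma integral_le_initial_rel_entropy:
  assumes "0 < \<epsilon>" "\<epsilon> < 1"
  shows "(\<integral>\<^sup>+ t \<in> {0..}. ennreal (integrand src tgt c w t) \<partial>lborel)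
    \<le> ennreal (2 * wnorm2 / (1 - \<epsilon>)^2 * (\<Sum>z\<in>UNIV. \<mu> z * rel_entropy (mixture_density \<epsilon> 0 z)))"
proof -
  have "(\<integral>\<^sup>+ t \<in> {0..}. ennreal (integrand src tgt c w t) \<partial>lborel)
      \<le> (\<integral>\<^sup>+ t. ennreal (dissipation \<epsilon> t) * indicator {0..} t \<partial>lborel)"
    using integrand_le_dissipation[OF assms]
    by (intro nn_integral_mono) (auto split: split_indicator intro!: ennreal_leI)
  also have "\<dots> \<le> ennreal (0 - dissipation_primitive \<epsilon> 0)"
    using assms dissipation_measurable dissipation_primitive_has_derivative
      dissipation_nonneg dissipation_primitive_nonpos
    by (intro nn_integral_atLeast_le_of_DERIV) auto
  finally show ?thesis
    by (simp add: dissipation_primitive_def)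
qed

lemma rel_entropy_mixture_density_0_le:
  assumes "0 < \<epsilon>" "\<epsilon> < 1"
  shows "rel_entropy (mixture_density \<epsilon> 0 z)
    \<le> \<mu> z * (((1 - \<epsilon>) / \<mu> z + \<epsilon>) * ln ((1 - \<epsilon>) / \<mu> z + \<epsilon>))"
proof -
  have "\<mu> x * (mixture_density \<epsilon> 0 z x * ln (mixture_density \<epsilon> 0 z x))
      \<le> (if x = z then \<mu> z * (((1 - \<epsilon>) / \<mu> z + \<epsilon>) * ln ((1 - \<epsilon>) / \<mu> z + \<epsilon>)) else 0)" for x
    using assms mu_pos[of x]
    by (auto simp: mixture_density_def heat_0 mult_nonneg_nonpos)
  then have "rel_entropy (mixture_density \<epsilon> 0 z)
      \<le> (\<Sum>x\<in>UNIV. if x = z then \<mu> z * (((1 - \<epsilon>) / \<mu> z + \<epsilon>) * ln ((1 - \<epsilon>) / \<mu> z + \<epsilon>)) else 0)"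
    unfolding rel_entropy_def by (rule sum_mono)
  then show ?thesis
    by simp
qed

lemma integral_le_entropy:
  "(\<integral>\<^sup>+ t \<in> {0..}. ennreal (integrand src tgt c w t) \<partial>lborel) \<le> ennreal (2 * wnorm2 * entropy \<mu>)"
proof -
  define U where "U \<epsilon> = 2 * wnorm2 / (1 - \<epsilon>)^2
      * (\<Sum>z\<in>UNIV. \<mu> z * (\<mu> z * (((1 - \<epsilon>) / \<mu> z + \<epsilon>) * ln ((1 - \<epsilon>) / \<mu> z + \<epsilon>))))" for \<epsilon>
  have "(\<integral>\<^sup>+ t \<in> {0..}. ennreal (integrand src tgt c w t) \<partial>lborel) \<le> ennreal (U \<epsilon>)"
    if "0 < \<epsilon>" "\<epsilon> < 1" for \<epsilon>
  proof -
    have "2 * wnorm2 / (1 - \<epsilon>)^2 * (\<Sum>z\<in>UNIV. \<mu> z * rel_entropy (mixture_density \<epsilon> 0 z)) \<le> U \<epsilon>"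
      unfolding U_def using that wnorm2_pos mu_pos rel_entropy_mixture_density_0_le
      by (intro mult_left_mono sum_mono) (auto simp: less_imp_le)
    then show ?thesis
      using integral_le_initial_rel_entropy[OF that] order_trans ennreal_leI by blast
  qed
  then have "\<forall>\<^sub>F \<epsilon> in at_right 0.
      (\<integral>\<^sup>+ t \<in> {0..}. ennreal (integrand src tgt c w t) \<partial>lborel) \<le> ennreal (U \<epsilon>)"
    unfolding eventually_at_right[OF zero_less_one] by (intro exI[of _ 1]) auto
  moreover have "continuous (at_right 0) U"
    unfolding U_def using mu_pos less_imp_neq[OF mu_pos, symmetric]
    by (intro continuous_intros) (auto simp: less_imp_le)
  then have "((\<lambda>\<epsilon>. ennreal (U \<epsilon>)) \<longlongrightarrow> ennreal (U 0)) (at_right 0)"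
    by (intro tendsto_ennrealI) (simp add: continuous_within)
  ultimately have "(\<integral>\<^sup>+ t \<in> {0..}. ennreal (integrand src tgt c w t) \<partial>lborel) \<le> ennreal (U 0)"
    by (intro tendsto_le[OF trivial_limit_at_right_real _ tendsto_const])
  also have "U 0 = 2 * wnorm2 * entropy \<mu>"
    unfolding U_def entropy_def using mu_pos less_imp_neq[OF mu_pos, symmetric]
    by (simp add: ln_div sum_negf sum_distrib_left algebra_simps)
  finally show ?thesis .
qed

end

lemma connected_imp_vertex_incident:
  fixes src tgt :: "'e \<Rightarrow> 'v::finite"
  assumes "graph_connected src tgt" and "CARD('v) \<ge> 2"
  shows "\<exists>e. x = src e \<or> x = tgt e"
proof -
  obtain y :: 'v where "y \<noteq> x"
    using assms(2) by (metis card_2_iff' ex_card obtain_subset_with_card_n)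
  moreover have "(x, y) \<in> (adj_rel src tgt)\<^sup>*"
    using assms(1) by (simp add: graph_connected_def)
  ultimately obtain z where "(x, z) \<in> adj_rel src tgt"
    by (metis converse_rtranclE)
  then show ?thesis
    by (auto simp: adj_rel_def)
qed

theorem lemma3p4:
  fixes src tgt :: "'e::finite \<Rightarrow> 'v::finite"
    and c w :: "'e \<Rightarrow> real"
  assumes "no_self_loops src tgt"
    and "graph_connected src tgt"
    and "CARD('v) \<ge> 2"
    and "\<forall>e. c e > 0"
    and "\<forall>e. w e > 0"
  shows "(\<integral>\<^sup>+ t \<in> {0..}. ennreal (integrand src tgt c w t) \<partial>lborel)
           \<le> ennreal (2 * (\<Sum>e\<in>UNIV. (w e)^2) * entropy (mu_w src tgt w))"
proof -
  interpret weighted_graph src tgt c w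
    using assms connected_imp_vertex_incident[OF assms(2,3)]
    by unfold_locales (auto simp: no_self_loops_def)
  show ?thesis
    using integral_le_entropy by (simp add: wnorm2_def \<mu>_def)
qed

end
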